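(* Let $X$ be a real Banach space and $A:X\rightrightarrows X^*$ maximal monotone with $\mathcal{F}_A=\{F_A\}$. Then for every $w\in\mathrm{dom}(A)$, $v^*\in\mathrm{Im}(A)$, $x\in X$ and $x^*\in X^*$: (i) $F_A(x,v^* )=g_{A,v^*}^*(x)=P_A(x,v^* )$; (ii) $F_A(w,x^* )=f_{A,w}^*(x^* )=P_A(w,x^* )$.
   Context: A representative function of $A$ is a proper convex lsc $h$ on $X\times X^*$ with $h(x,x^* )\ge\langle x,x^*\rangle$ everywhere and equality on $\mathrm{Gr}(A)$; $\mathcal{F}_A$ is the set of all of them. $F_A(x,x^* )=\sup_{(y,y^* )\in\mathrm{Gr}(A)}\{\langle y,x^*\rangle+\langle x,y^*\rangle-\langle y,y^*\rangle\}$. With $\phi(x,x^* )=\langle x,x^*\rangle$ on $\mathrm{Gr}(A)$ and $+\infty$ elsewhere, $P_A$ is the restriction to $X\times X^*$ of $\phi^{**}$. $f_{A,w}(x)=\inf_{a^*\in X^*}\{P_A(x,a^* )-\langle w,a^*\rangle\}$, $g_{A,v^*}(x^* )=\inf_{a\in X}\{P_A(a,x^* )-\langle a,v^*\rangle\}$, with conjugates $f_{A,w}^*(x^* )=\sup_{y\in X}\{\langle y,x^*\rangle-f_{A,w}(y)\}$ and $g_{A,v^*}^*(x)=\sup_{y^*\in X^*}\{\langle x,y^*\rangle-g_{A,v^*}(y^* )\}$. *)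

theory Defs
  imports "HOL-Analysis.Analysis" "HOL-Library.Extended_Real"
begin


(* X is a real Banach space, the type 'a::banach; the dual space is the type of
   bounded linear functionals 'a =>L real; the bidual is (('a =>L real) =>L real).
   A multivalued operator A is given by its graph, a set of pairs (point, functional). Convexity and lower
   semicontinuity are expressed via the epigraph, in the norm topology. *)

type_synonym 'a dual = "'a \<Rightarrow>\<^sub>L real"

definition pair :: "'a::real_normed_vector \<Rightarrow> 'a dual \<Rightarrow> real" where
  "pair x xs = blinfun_apply xs x"

definition dom_op :: "('a \<times> 'b) set \<Rightarrow> 'a set" where
  "dom_op A = fst ` A"

definition im_op :: "('a \<times> 'b) set \<Rightarrow> 'b set" where
  "im_op A = snd ` A"

definition monotone_op :: "('a::real_normed_vector \<times> 'a dual) set \<Rightarrow> bool" where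
  "monotone_op A \<longleftrightarrow> (\<forall>(x, xs)\<in>A. \<forall>(y, ys)\<in>A. pair (x - y) (xs - ys) \<ge> 0)"

definition maximal_monotone :: "('a::real_normed_vector \<times> 'a dual) set \<Rightarrow> bool" where
  "maximal_monotone A \<longleftrightarrow> monotone_op A \<and>
     (\<forall>B. monotone_op B \<and> A \<subseteq> B \<longrightarrow> B = A)"


definition proper_fun :: "('b \<Rightarrow> ereal) \<Rightarrow> bool" where
  "proper_fun h \<longleftrightarrow> (\<forall>p. h p \<noteq> -\<infinity>) \<and> (\<exists>p. h p \<noteq> \<infinity>)"

definition convex_fun :: "('b::real_vector \<Rightarrow> ereal) \<Rightarrow> bool" where
  "convex_fun h \<longleftrightarrow> convex {(p, r::real). h p \<le> ereal r}"

definition lsc_fun :: "('b::topological_space \<Rightarrow> ereal) \<Rightarrow> bool" where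
  "lsc_fun h \<longleftrightarrow> closed {(p, r::real). h p \<le> ereal r}"

definition representative_funs ::
  "('a::real_normed_vector \<times> 'a dual) set \<Rightarrow> ('a \<times> 'a dual \<Rightarrow> ereal) set" where
  "representative_funs A = {h. proper_fun h \<and> convex_fun h \<and> lsc_fun h \<and>
      (\<forall>x xs. h (x, xs) \<ge> ereal (pair x xs)) \<and>
      (\<forall>(x, xs)\<in>A. h (x, xs) = ereal (pair x xs))}"


definition fitzpatrick :: "('a::real_normed_vector \<times> 'a dual) set \<Rightarrow> 'a \<times> 'a dual \<Rightarrow> ereal" where
  "fitzpatrick A = (\<lambda>(x, xs). SUP (y, ys)\<in>A. ereal (pair y xs + pair x ys - pair y ys))"


definition phi_fun :: "('a::real_normed_vector \<times> 'a dual) set \<Rightarrow> 'a \<times> 'a dual \<Rightarrow> ereal" where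
  "phi_fun A = (\<lambda>(x, xs). if (x, xs) \<in> A then ereal (pair x xs) else \<infinity>)"

definition phi_conj :: "('a::real_normed_vector \<times> 'a dual) set \<Rightarrow> 'a dual \<times> ('a dual \<Rightarrow>\<^sub>L real) \<Rightarrow> ereal" where
  "phi_conj A = (\<lambda>(ys, yss). SUP p\<in>UNIV.
      ereal (pair (fst p) ys + blinfun_apply yss (snd p)) - phi_fun A p)"

definition P_fun :: "('a::real_normed_vector \<times> 'a dual) set \<Rightarrow> 'a \<times> 'a dual \<Rightarrow> ereal" where
  "P_fun A = (\<lambda>(x, xs). SUP q\<in>UNIV.
      ereal (pair x (fst q) + blinfun_apply (snd q) xs) - phi_conj A q)"

definition f_fun :: "('a::real_normed_vector \<times> 'a dual) set \<Rightarrow> 'a \<Rightarrow> 'a \<Rightarrow> ereal" where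
  "f_fun A w x = (INF as\<in>UNIV. P_fun A (x, as) - ereal (pair w as))"

definition g_fun :: "('a::real_normed_vector \<times> 'a dual) set \<Rightarrow> 'a dual \<Rightarrow> 'a dual \<Rightarrow> ereal" where
  "g_fun A vs xs = (INF a\<in>UNIV. P_fun A (a, xs) - ereal (pair a vs))"

definition f_conj :: "('a::real_normed_vector \<times> 'a dual) set \<Rightarrow> 'a \<Rightarrow> 'a dual \<Rightarrow> ereal" where
  "f_conj A w xs = (SUP y\<in>UNIV. ereal (pair y xs) - f_fun A w y)"

definition g_conj :: "('a::real_normed_vector \<times> 'a dual) set \<Rightarrow> 'a dual \<Rightarrow> 'a \<Rightarrow> ereal" where
  "g_conj A vs x = (SUP ys\<in>UNIV. ereal (pair x ys) - g_fun A vs ys)"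

end

theory Submission
  imports Defs
begin

text \<open>The conjugate of \<open>\<phi>\<^sub>A\<close> at the canonical image \<open>(y*, \<hat>y)\<close> of \<open>X* \<times> X\<close> in
  \<open>X* \<times> X**\<close> is \<open>F\<^sub>A(y, y*)\<close>. Hence \<open>P\<^sub>A\<close>, the supremum of the affine minorants of
  \<open>\<phi>\<^sub>A\<close>, dominates every function \<open>(x, x*) \<mapsto> \<langle>x, y*\<rangle> + \<langle>y, x*\<rangle> - F\<^sub>A(y, y*)\<close>; for
  monotone \<open>A\<close> this gives \<open>F\<^sub>A \<le> P\<^sub>A\<close>, so \<open>P\<^sub>A\<close> is a representative function and the
  uniqueness hypothesis forces \<open>P\<^sub>A = F\<^sub>A\<close>. Both conjugates are then squeezed: the points of
  the graph show \<open>F\<^sub>A \<le> g*, f*\<close>, and the minorants above, with \<open>P\<^sub>A = F\<^sub>A\<close> inserted into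
  \<open>g\<^sub>A\<^sub>,\<^sub>v\<^sub>*\<close> and \<open>f\<^sub>A\<^sub>,\<^sub>w\<close>, show \<open>g*, f* \<le> P\<^sub>A\<close>.\<close>

definition bidual_embedding :: "'a::real_normed_vector \<Rightarrow> ('a dual \<Rightarrow>\<^sub>L real)" where
  "bidual_embedding a = Blinfun (\<lambda>ys. blinfun_apply ys a)"

lemma bidual_embedding_apply [simp]: "blinfun_apply (bidual_embedding a) ys = blinfun_apply ys a"
  unfolding bidual_embedding_def
  by (subst bounded_linear_Blinfun_apply) (auto intro: blinfun.bounded_linear_left)

lemma ereal_minus_le_swap: "ereal c - y \<le> z \<Longrightarrow> ereal c - z \<le> (y::ereal)"
  by (cases y; cases z) auto

lemma ereal_minus_minus: "ereal c - (z - ereal d) = ereal (c + d) - z"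
  by (cases z) auto

lemma convex_closed_epigraph_linear_minus:
  fixes L :: "'b::real_normed_vector \<Rightarrow> real" and c :: ereal
  assumes L: "bounded_linear L"
  shows "convex {(p, r::real). ereal (L p) - c \<le> ereal r}
       \<and> closed {(p, r::real). ereal (L p) - c \<le> ereal r}"
proof (cases c)
  case (real d)
  let ?g = "\<lambda>z::'b \<times> real. L (fst z) - snd z"
  have epi: "{(p, r::real). ereal (L p) - c \<le> ereal r} = ?g -` {..d}"
    using real by auto
  have "bounded_linear ?g"
    by (intro bounded_linear_sub bounded_linear_compose[OF L] bounded_linear_fst bounded_linear_snd)
  then have "linear ?g" "\<And>z. isCont ?g z"
    by (auto intro: bounded_linear.linear bounded_linear.isCont)
  then show ?thesis
    unfolding epi by (auto intro: convex_linear_vimage continuous_closed_vimage)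
qed auto

lemma convex_fun_lsc_fun_SUP_linear_minus:
  fixes L :: "'i \<Rightarrow> 'b::real_normed_vector \<Rightarrow> real" and c :: "'i \<Rightarrow> ereal"
  assumes "\<And>i. bounded_linear (L i)"
  shows "convex_fun (\<lambda>p. SUP i\<in>I. ereal (L i p) - c i)
       \<and> lsc_fun (\<lambda>p. SUP i\<in>I. ereal (L i p) - c i)"
proof -
  have "{(p, r::real). (SUP i\<in>I. ereal (L i p) - c i) \<le> ereal r}
      = (\<Inter>i\<in>I. {(p, r). ereal (L i p) - c i \<le> ereal r})"
    by (auto simp: SUP_le_iff)
  then show ?thesis
    using convex_closed_epigraph_linear_minus[OF assms]
    unfolding convex_fun_def lsc_fun_def by (auto intro!: convex_INT closed_INT)
qed

lemma convex_fun_lsc_fun_P_fun: "convex_fun (P_fun A) \<and> lsc_fun (P_fun A)"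
proof -
  have "bounded_linear (\<lambda>p::'a \<times> 'a dual. pair (fst p) (fst q) + blinfun_apply (snd q) (snd p))"
    for q :: "'a dual \<times> ('a dual \<Rightarrow>\<^sub>L real)"
    unfolding pair_def
    by (intro bounded_linear_add bounded_linear_compose[OF blinfun.bounded_linear_right]
        bounded_linear_fst bounded_linear_snd)
  from convex_fun_lsc_fun_SUP_linear_minus[OF this, where I = UNIV and c = "phi_conj A"]
  show ?thesis by (simp add: P_fun_def split_beta')
qed

lemma SUP_minus_phi_fun:
  "(SUP p. ereal (h p) - phi_fun A p) = (SUP p\<in>A. ereal (h p - pair (fst p) (snd p)))"
proof (rule antisym)
  show "(SUP p. ereal (h p) - phi_fun A p) \<le> (SUP p\<in>A. ereal (h p - pair (fst p) (snd p)))"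
    by (rule SUP_least) (auto simp: phi_fun_def split_beta intro: SUP_upper2)
  show "(SUP p\<in>A. ereal (h p - pair (fst p) (snd p))) \<le> (SUP p. ereal (h p) - phi_fun A p)"
  proof (rule SUP_least)
    fix p assume "p \<in> A"
    then have "ereal (h p - pair (fst p) (snd p)) = ereal (h p) - phi_fun A p"
      by (simp add: phi_fun_def split_beta)
    also have "\<dots> \<le> (SUP p. ereal (h p) - phi_fun A p)"
      by (rule SUP_upper) simp
    finally show "ereal (h p - pair (fst p) (snd p)) \<le> (SUP p. ereal (h p) - phi_fun A p)" .
  qed
qed

lemma phi_conj_bidual_embedding: "phi_conj A (ys, bidual_embedding a) = fitzpatrick A (a, ys)"
  by (simp add: phi_conj_def fitzpatrick_def SUP_minus_phi_fun split_beta pair_def algebra_simps)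

lemma minorant_fitzpatrick_le_P_fun:
  "ereal (pair x ys + pair a xs) - fitzpatrick A (a, ys) \<le> P_fun A (x, xs)"
proof -
  have "ereal (pair x ys + pair a xs) - fitzpatrick A (a, ys)
      = ereal (pair x ys + blinfun_apply (bidual_embedding a) xs) - phi_conj A (ys, bidual_embedding a)"
    by (simp add: phi_conj_bidual_embedding pair_def)
  also have "\<dots> \<le> P_fun A (x, xs)"
    unfolding P_fun_def case_prod_conv
    by (rule SUP_upper2[of "(ys, bidual_embedding a)"]) auto
  finally show ?thesis .
qed

lemma P_fun_le_phi_fun: "P_fun A p \<le> phi_fun A p"
  unfolding P_fun_def split_beta
proof (rule SUP_least)
  fix q
  have "ereal (pair (fst p) (fst q) + blinfun_apply (snd q) (snd p)) - phi_fun A p \<le> phi_conj A q"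
    unfolding phi_conj_def split_beta by (rule SUP_upper) simp
  then show "ereal (pair (fst p) (fst q) + blinfun_apply (snd q) (snd p)) - phi_conj A q \<le> phi_fun A p"
    by (rule ereal_minus_le_swap)
qed

lemma P_fun_le_pair_on_graph: "(x, xs) \<in> A \<Longrightarrow> P_fun A (x, xs) \<le> ereal (pair x xs)"
  using P_fun_le_phi_fun[of A "(x, xs)"] by (simp add: phi_fun_def)

lemma fitzpatrick_le_pair_on_graph:
  assumes "monotone_op A" and "(y, ys) \<in> A"
  shows "fitzpatrick A (y, ys) \<le> ereal (pair y ys)"
  unfolding fitzpatrick_def case_prod_conv
proof (rule SUP_least, clarify)
  fix z zs assume "(z, zs) \<in> A"
  with assms have "0 \<le> pair (y - z) (ys - zs)"
    unfolding monotone_op_def by blast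
  then show "ereal (pair z ys + pair y zs - pair z zs) \<le> ereal (pair y ys)"
    by (simp add: pair_def blinfun.diff_left blinfun.diff_right algebra_simps)
qed

lemma fitzpatrick_le_P_fun:
  assumes "monotone_op A"
  shows "fitzpatrick A (x, xs) \<le> P_fun A (x, xs)"
  unfolding fitzpatrick_def case_prod_conv
proof (rule SUP_least, clarify)
  fix y ys assume "(y, ys) \<in> A"
  then have "ereal (pair y xs + pair x ys - pair y ys)
      \<le> ereal (pair x ys + pair y xs) - fitzpatrick A (y, ys)"
    using fitzpatrick_le_pair_on_graph[OF assms]
    by (cases "fitzpatrick A (y, ys)") force+
  also have "\<dots> \<le> P_fun A (x, xs)"
    by (rule minorant_fitzpatrick_le_P_fun)
  finally show "ereal (pair y xs + pair x ys - pair y ys) \<le> P_fun A (x, xs)" .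
qed

lemma P_fun_in_representative_funs:
  assumes mono: "monotone_op A" and F: "fitzpatrick A \<in> representative_funs A"
  shows "P_fun A \<in> representative_funs A"
proof -
  have "A \<noteq> {}" \<comment> \<open>the Fitzpatrick function of the empty graph is constantly \<open>-\<infinity>\<close>\<close>
    using F by (auto simp: representative_funs_def proper_fun_def fitzpatrick_def bot_ereal_def)
  then obtain x0 xs0 where "(x0, xs0) \<in> A" by auto
  have pair_le_P: "ereal (pair x xs) \<le> P_fun A (x, xs)" for x xs
    using F fitzpatrick_le_P_fun[OF mono, of x xs]
    by (auto simp: representative_funs_def intro: order_trans)
  have P_on_graph: "P_fun A (x, xs) = ereal (pair x xs)" if "(x, xs) \<in> A" for x xs
    using pair_le_P P_fun_le_pair_on_graph[OF that] by (simp add: antisym)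
  have "proper_fun (P_fun A)"
    unfolding proper_fun_def
  proof
    show "\<forall>p. P_fun A p \<noteq> -\<infinity>"
      using pair_le_P by (metis MInfty_neq_ereal(1) ereal_infty_less_eq(2) prod.collapse)
    show "\<exists>p. P_fun A p \<noteq> \<infinity>"
      using P_on_graph[OF \<open>(x0, xs0) \<in> A\<close>] by (intro exI[of _ "(x0, xs0)"]) simp
  qed
  then show ?thesis
    using convex_fun_lsc_fun_P_fun pair_le_P P_on_graph
    by (auto simp: representative_funs_def)
qed

lemma fitzpatrick_le_g_conj: "fitzpatrick A (x, vs) \<le> g_conj A vs x"
  unfolding fitzpatrick_def case_prod_conv
proof (rule SUP_least, clarify)
  fix z zs assume "(z, zs) \<in> A"
  have "g_fun A vs zs \<le> P_fun A (z, zs) - ereal (pair z vs)"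
    unfolding g_fun_def by (rule INF_lower) simp
  also have "\<dots> \<le> ereal (pair z zs - pair z vs)"
    using P_fun_le_pair_on_graph[OF \<open>(z, zs) \<in> A\<close>] by (cases "P_fun A (z, zs)") auto
  finally have "ereal (pair x zs) - ereal (pair z zs - pair z vs) \<le> ereal (pair x zs) - g_fun A vs zs"
    by (rule ereal_minus_mono[OF order_refl])
  also have "\<dots> \<le> g_conj A vs x"
    unfolding g_conj_def by (rule SUP_upper) simp
  finally show "ereal (pair z vs + pair x zs - pair z zs) \<le> g_conj A vs x"
    by (simp add: algebra_simps)
qed

lemma g_conj_le_P_fun:
  assumes "monotone_op A"
  shows "g_conj A vs x \<le> P_fun A (x, vs)"
  unfolding g_conj_def
proof (rule SUP_least)
  fix ys
  have "ereal (pair x ys) - g_fun A vs ys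
      = (SUP a. ereal (pair x ys + pair a vs) - P_fun A (a, ys))"
    unfolding g_fun_def by (simp add: SUP_ereal_minus_right[symmetric] ereal_minus_minus)
  also have "\<dots> \<le> P_fun A (x, vs)"
  proof (rule SUP_least)
    fix a
    have "ereal (pair x ys + pair a vs) - P_fun A (a, ys)
        \<le> ereal (pair x ys + pair a vs) - fitzpatrick A (a, ys)"
      by (rule ereal_minus_mono[OF order_refl fitzpatrick_le_P_fun[OF assms]])
    also have "\<dots> \<le> P_fun A (x, vs)"
      by (rule minorant_fitzpatrick_le_P_fun)
    finally show "ereal (pair x ys + pair a vs) - P_fun A (a, ys) \<le> P_fun A (x, vs)" .
  qed
  finally show "ereal (pair x ys) - g_fun A vs ys \<le> P_fun A (x, vs)" .
qed

lemma fitzpatrick_le_f_conj: "fitzpatrick A (w, xs) \<le> f_conj A w xs"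
  unfolding fitzpatrick_def case_prod_conv
proof (rule SUP_least, clarify)
  fix y ys assume "(y, ys) \<in> A"
  have "f_fun A w y \<le> P_fun A (y, ys) - ereal (pair w ys)"
    unfolding f_fun_def by (rule INF_lower) simp
  also have "\<dots> \<le> ereal (pair y ys - pair w ys)"
    using P_fun_le_pair_on_graph[OF \<open>(y, ys) \<in> A\<close>] by (cases "P_fun A (y, ys)") auto
  finally have "ereal (pair y xs) - ereal (pair y ys - pair w ys) \<le> ereal (pair y xs) - f_fun A w y"
    by (rule ereal_minus_mono[OF order_refl])
  also have "\<dots> \<le> f_conj A w xs"
    unfolding f_conj_def by (rule SUP_upper) simp
  finally show "ereal (pair y xs + pair w ys - pair y ys) \<le> f_conj A w xs"
    by (simp add: algebra_simps)
qed

lemma f_conj_le_P_fun: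
  assumes "monotone_op A"
  shows "f_conj A w xs \<le> P_fun A (w, xs)"
  unfolding f_conj_def
proof (rule SUP_least)
  fix y
  have "ereal (pair y xs) - f_fun A w y
      = (SUP as. ereal (pair w as + pair y xs) - P_fun A (y, as))"
    unfolding f_fun_def by (simp add: SUP_ereal_minus_right[symmetric] ereal_minus_minus add.commute)
  also have "\<dots> \<le> P_fun A (w, xs)"
  proof (rule SUP_least)
    fix as
    have "ereal (pair w as + pair y xs) - P_fun A (y, as)
        \<le> ereal (pair w as + pair y xs) - fitzpatrick A (y, as)"
      by (rule ereal_minus_mono[OF order_refl fitzpatrick_le_P_fun[OF assms]])
    also have "\<dots> \<le> P_fun A (w, xs)"
      by (rule minorant_fitzpatrick_le_P_fun)
    finally show "ereal (pair w as + pair y xs) - P_fun A (y, as) \<le> P_fun A (w, xs)" .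
  qed
  finally show "ereal (pair y xs) - f_fun A w y \<le> P_fun A (w, xs)" .
qed

theorem corollary3p5:
  fixes A :: "('a::banach \<times> ('a \<Rightarrow>\<^sub>L real)) set"
  assumes "maximal_monotone A"
    and "representative_funs A = {fitzpatrick A}"
    and "w \<in> dom_op A" and "vs \<in> im_op A"
  shows "(\<forall>x. fitzpatrick A (x, vs) = g_conj A vs x \<and> g_conj A vs x = P_fun A (x, vs))
       \<and> (\<forall>xs. fitzpatrick A (w, xs) = f_conj A w xs \<and> f_conj A w xs = P_fun A (w, xs))"
proof -
  have mono: "monotone_op A"
    using assms(1) by (simp add: maximal_monotone_def)
  have "P_fun A \<in> representative_funs A"
    using P_fun_in_representative_funs[OF mono] assms(2) by simp
  then have P_eq_F: "P_fun A = fitzpatrick A"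
    using assms(2) by blast
  show ?thesis
    using fitzpatrick_le_g_conj[of A _ vs] g_conj_le_P_fun[OF mono, of vs]
      fitzpatrick_le_f_conj[of A w] f_conj_le_P_fun[OF mono, of w]
    by (simp add: P_eq_F antisym)
qed

end
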